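(* Let $p\ge1$ and let $(\mu_k)_{k\ge1}$ and $\mu$ be probability measures in $\mathcal{P}_{p,ac}(S^{d-1})$ such that $\mu_k\to\mu$ weakly as $k\to\infty$. Then $SSW_p(\mu_k,\mu)\to0$ as $k\to\infty$.
   Context: $\mathcal{P}_{p,ac}(S^{d-1})$: probability measures on $S^{d-1}$ absolutely continuous w.r.t. the uniform measure with finite $p$-th moment. $\mathbb{V}_{d,2}=\{U\in\mathbb{R}^{d\times2}:U^TU=I_2\}$ with uniform probability $\sigma$; $P^U(x)=U^Tx/\|U^Tx\|_2$ for $U^Tx\neq0$. $W_p$ on $S^1$ uses the geodesic distance $d_{S^1}$. $SSW_p^p(\mu,\nu)=\int_{\mathbb{V}_{d,2}}W_p^p(P^U_\#\mu,P^U_\#\nu)\,\mathrm{d}\sigma(U)$. *)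

theory Defs
  imports "HOL-Probability.Probability"
begin

text \<open>Normalised uniform measure on the unit sphere S^{d-1}, realised as the
  push-forward of the normalised Lebesgue measure on the unit ball under
  radial projection x \<mapsto> x/|x| (the cone measure, equal to normalised surface measure).\<close>
definition sphere_unif :: "'a::euclidean_space measure" where
  "sphere_unif = distr (uniform_measure lborel (ball 0 1)) borel (\<lambda>x. x /\<^sub>R norm x)"

definition Pac :: "real \<Rightarrow> 'a::euclidean_space measure set" where
  "Pac p = {\<mu>. sets \<mu> = sets borel \<and> prob_space \<mu> \<and> emeasure \<mu> (sphere 0 1) = 1
              \<and> absolutely_continuous sphere_unif \<mu>
              \<and> (\<integral>\<^sup>+ x. ennreal (norm x powr p) \<partial>\<mu>) < \<infinity>}"

text \<open>Stiefel manifold V_{d,2}: pairs (u1,u2) of orthonormal vectors (the columns of U).\<close>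
definition stiefel2 :: "('a::euclidean_space \<times> 'a) set" where
  "stiefel2 = {(u1, u2). norm u1 = 1 \<and> norm u2 = 1 \<and> u1 \<bullet> u2 = 0}"

definition gram_schmidt2 :: "'a::euclidean_space \<times> 'a \<Rightarrow> 'a \<times> 'a" where
  "gram_schmidt2 = (\<lambda>(x, y). let u = x /\<^sub>R norm x; w = y - (y \<bullet> u) *\<^sub>R u in (u, w /\<^sub>R norm w))"

text \<open>Uniform (O(d)-invariant) probability measure on V_{d,2}: Gram--Schmidt of two
  independent uniform points of the unit ball.\<close>
definition stiefel_unif :: "('a::euclidean_space \<times> 'a) measure" where
  "stiefel_unif = distr (uniform_measure lborel (ball 0 1 \<times> ball 0 1)) borel gram_schmidt2"

text \<open>U^T x, identifying R^2 with the complex plane, and P^U(x) = U^T x / |U^T x| in S^1.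
  The value on the null set U^T x = 0 is fixed arbitrarily to 1.\<close>
definition projU :: "'a::euclidean_space \<times> 'a \<Rightarrow> 'a \<Rightarrow> complex" where
  "projU U x = Complex (fst U \<bullet> x) (snd U \<bullet> x)"

definition PU :: "'a::euclidean_space \<times> 'a \<Rightarrow> 'a \<Rightarrow> complex" where
  "PU U x = (if projU U x \<noteq> 0 then projU U x / complex_of_real (cmod (projU U x)) else 1)"

definition dS1 :: "complex \<Rightarrow> complex \<Rightarrow> real" where
  "dS1 z w = arccos (Re (z * cnj w))"

definition couplings :: "complex measure \<Rightarrow> complex measure \<Rightarrow> (complex \<times> complex) measure set" where
  "couplings \<mu> \<nu> = {\<gamma>. sets \<gamma> = sets borel \<and> prob_space \<gamma>
        \<and> distr \<gamma> borel fst = \<mu> \<and> distr \<gamma> borel snd = \<nu>}"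

definition Wpp_S1 :: "real \<Rightarrow> complex measure \<Rightarrow> complex measure \<Rightarrow> ennreal" where
  "Wpp_S1 p \<mu> \<nu> = (INF \<gamma>\<in>couplings \<mu> \<nu>. \<integral>\<^sup>+ z. ennreal (dS1 (fst z) (snd z) powr p) \<partial>\<gamma>)"

definition SSWpp :: "real \<Rightarrow> 'a::euclidean_space measure \<Rightarrow> 'a measure \<Rightarrow> ennreal" where
  "SSWpp p \<mu> \<nu> = (\<integral>\<^sup>+ U. Wpp_S1 p (distr \<mu> borel (PU U)) (distr \<nu> borel (PU U)) \<partial>stiefel_unif)"

text \<open>SSW_p itself (SSW_p^p is finite, being bounded by pi^p).\<close>
definition SSW :: "real \<Rightarrow> 'a::euclidean_space measure \<Rightarrow> 'a measure \<Rightarrow> real" where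
  "SSW p \<mu> \<nu> = enn2real (SSWpp p \<mu> \<nu>) powr (1 / p)"

definition weak_conv_sph :: "(nat \<Rightarrow> 'a::euclidean_space measure) \<Rightarrow> 'a measure \<Rightarrow> bool" where
  "weak_conv_sph \<mu>s \<mu> \<longleftrightarrow> (\<forall>f :: 'a \<Rightarrow> real. continuous_on UNIV f \<and> bounded (range f) \<longrightarrow>
      (\<lambda>k. \<integral>x. f x \<partial>(\<mu>s k)) \<longlonglongrightarrow> (\<integral>x. f x \<partial>\<mu>))"

end

theory Submission
  imports Defs
begin

text \<open>
  Fix \<open>e > 0\<close> and a partition of unity \<open>(\<phi>\<^sub>t)\<^sub>t\<^sub>\<in>\<^sub>T\<close> of the circle by continuous functions
  whose supports are so small that the \<open>p\<close>-th power of the geodesic distance is at most \<open>e\<close>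
  within each support. For two probability measures on the circle there is a transport plan that
  keeps almost all of the mass the two measures share in each cell \<open>\<phi>\<^sub>t\<close> inside that cell and
  couples the rest independently; hence
  \<open>W\<^sub>p\<^sup>p(\<nu>\<^sub>1, \<nu>\<^sub>2) \<le> e + \<pi>\<^sup>p (\<eta> + \<Sum>\<^sub>t |\<integral>\<phi>\<^sub>t d\<nu>\<^sub>1 - \<integral>\<phi>\<^sub>t d\<nu>\<^sub>2|)\<close> for any \<open>\<eta> > 0\<close>.
  For almost every \<open>U\<close> the first column of \<open>U\<close> is nonzero, so the set where \<open>U\<^sup>T x = 0\<close> lies
  in a hyperplane, which is null for measures absolutely continuous w.r.t. the uniform measure.
  Off this set \<open>P\<^sup>U\<close> is continuous, so weak convergence gives
  \<open>\<integral>\<phi>\<^sub>t \<circ> P\<^sup>U d\<mu>\<^sub>k \<rightarrow> \<integral>\<phi>\<^sub>t \<circ> P\<^sup>U d\<mu>\<close>, and dominated convergence over the Stiefel manifold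
  makes the bound on \<open>SSW\<^sub>p\<^sup>p(\<mu>\<^sub>k, \<mu>)\<close> eventually small.
\<close>

section \<open>Geodesic distance on the circle\<close>

lemma arccos_outside: "y \<notin> {-1..1} \<Longrightarrow> arccos y = (THE x. False)"
proof -
  assume y: "y \<notin> {-1..1}"
  have "cos x \<noteq> y" for x
  proof
    assume "cos x = y"
    with y have "\<not> (-1 \<le> cos x \<and> cos x \<le> 1)" by simp
    then show False by simp
  qed
  then show ?thesis by (simp add: arccos_def)
qed

lemma borel_measurable_arccos [measurable]: "arccos \<in> borel_measurable borel"
proof -
  have "arccos = (\<lambda>y. if y \<in> {-1..1} then arccos y else THE x. False)"
    using arccos_outside by fastforce
  also have "\<dots> \<in> borel_measurable borel"
    by (intro borel_measurable_continuous_on_if continuous_on_arccos' continuous_on_const) auto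
  finally show ?thesis .
qed

lemma Re_mult_cnj_bounds:
  assumes "cmod z = 1" "cmod w = 1"
  shows "-1 \<le> Re (z * cnj w)" "Re (z * cnj w) \<le> 1"
proof -
  have "\<bar>Re (z * cnj w)\<bar> \<le> 1"
    using abs_Re_le_cmod[of "z * cnj w"] assms by (simp add: norm_mult)
  then show "-1 \<le> Re (z * cnj w)" "Re (z * cnj w) \<le> 1" by auto
qed

lemma dS1_bounds:
  assumes "cmod z = 1" "cmod w = 1"
  shows "0 \<le> dS1 z w" "dS1 z w \<le> pi"
  using Re_mult_cnj_bounds[OF assms] by (simp_all add: dS1_def arccos_lbound arccos_ubound)

lemma borel_measurable_dS1 [measurable]: "(\<lambda>(z, w). dS1 z w) \<in> borel_measurable borel"
proof -
  have "(\<lambda>x :: complex \<times> complex. Re (fst x * cnj (snd x))) \<in> borel_measurable borel"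
    by (intro borel_measurable_continuous_onI continuous_intros)
  from measurable_compose[OF this borel_measurable_arccos]
  show ?thesis by (simp add: dS1_def case_prod_beta')
qed

lemma dS1_powr_le_if_close:
  assumes "0 < e" "0 < p"
  obtains c where "0 < c"
    "\<And>z w. cmod z = 1 \<Longrightarrow> cmod w = 1 \<Longrightarrow> cmod (z - w) < c \<Longrightarrow> dS1 z w powr p \<le> e"
proof -
  define \<theta> where "\<theta> = e powr (1 / p)"
  have "0 < \<theta>" using assms by (simp add: \<theta>_def)
  with continuous_on_arccos'[unfolded continuous_on_iff, rule_format, of 1 \<theta>]
  obtain c where c: "0 < c" "\<And>y. y \<in> {-1..1} \<Longrightarrow> dist y 1 < c \<Longrightarrow> dist (arccos y) (arccos 1) < \<theta>"
    by auto
  show ?thesis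
  proof (rule that[OF c(1)])
    fix z w assume z: "cmod z = 1" and w: "cmod w = 1" and zw: "cmod (z - w) < c"
    have "1 - Re (z * cnj w) \<le> cmod (1 - z * cnj w)"
      using complex_Re_le_cmod[of "1 - z * cnj w"] by simp
    also have "1 - z * cnj w = z * cnj (z - w)"
      using z by (simp add: algebra_simps complex_norm_square[symmetric] mult.commute)
    also have "cmod \<dots> = cmod (z - w)" using z by (simp del: complex_cnj_diff add: norm_mult)
    finally have "dist (Re (z * cnj w)) 1 < c"
      using zw Re_mult_cnj_bounds[OF z w] by (simp add: dist_real_def)
    then have "dS1 z w < \<theta>"
      using c(2)[of "Re (z * cnj w)"] Re_mult_cnj_bounds[OF z w] by (simp add: dS1_def dist_real_def)
    then have "dS1 z w powr p \<le> \<theta> powr p"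
      using dS1_bounds[OF z w] assms by (intro powr_mono2) auto
    also have "\<dots> = e" using assms by (simp add: \<theta>_def powr_powr)
    finally show "dS1 z w powr p \<le> e" .
  qed
qed

section \<open>Transport plans built from a partition of unity\<close>

lemma compact_partition_of_unity:
  fixes K :: "'b::metric_space set"
  assumes "compact K" and "0 < \<delta>"
  obtains T :: "'b set" and \<phi> :: "'b \<Rightarrow> 'b \<Rightarrow> real"
  where "finite T" "\<And>t. continuous_on UNIV (\<phi> t)" "\<And>t z. 0 \<le> \<phi> t z"
    "\<And>t z. t \<in> T \<Longrightarrow> \<phi> t z \<le> 1" "\<And>z. z \<in> K \<Longrightarrow> (\<Sum>t\<in>T. \<phi> t z) = 1"
    "\<And>t z. 0 < \<phi> t z \<Longrightarrow> dist z t < \<delta>"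
proof -
  obtain T where T: "T \<subseteq> K" "finite T" "K \<subseteq> (\<Union>t\<in>T. ball t (\<delta>/2))"
    using compactE_image[OF assms(1), of K "\<lambda>t. ball t (\<delta>/2)"] assms(2) by force
  define \<psi> where "\<psi> (t::'b) z = max 0 (\<delta> - dist z t)" for t z
  \<comment> \<open>the floor \<open>\<delta>/2\<close> of the denominator is never active on \<open>K\<close>\<close>
  define \<phi> where "\<phi> t z = \<psi> t z / max (\<Sum>s\<in>T. \<psi> s z) (\<delta>/2)" for t z
  have \<psi>_nonneg: "0 \<le> \<psi> t z" for t z by (simp add: \<psi>_def)
  have \<psi>_le_sum: "\<psi> t z \<le> (\<Sum>s\<in>T. \<psi> s z)" if "t \<in> T" for t z
    using T(2) \<psi>_nonneg that by (intro member_le_sum) auto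
  have denom_pos: "0 < max (\<Sum>s\<in>T. \<psi> s z) (\<delta>/2)" for z using assms(2) by simp
  show ?thesis
  proof
    show "finite T" by fact
    show "continuous_on UNIV (\<phi> t)" for t
    proof -
      have "max (\<Sum>s\<in>T. \<psi> s z) (\<delta>/2) \<noteq> 0" for z
        using denom_pos[of z] by linarith
      then show ?thesis
        unfolding \<phi>_def \<psi>_def by (intro continuous_intros) auto
    qed
    show "0 \<le> \<phi> t z" for t z unfolding \<phi>_def using denom_pos[of z] \<psi>_nonneg[of t z] by simp
    show "\<phi> t z \<le> 1" if "t \<in> T" for t z
      unfolding \<phi>_def using denom_pos[of z] \<psi>_le_sum[OF that, of z]
      by (simp add: divide_le_eq_1 le_max_iff_disj)
    show "(\<Sum>t\<in>T. \<phi> t z) = 1" if "z \<in> K" for z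
    proof -
      from that T(3) obtain t where t: "t \<in> T" "dist z t < \<delta>/2" by (auto simp: dist_commute)
      then have "\<delta>/2 \<le> (\<Sum>s\<in>T. \<psi> s z)"
        using \<psi>_le_sum[of t z] by (simp add: \<psi>_def)
      then show ?thesis using denom_pos[of z] by (simp add: \<phi>_def max_def sum_divide_distrib[symmetric])
    qed
    show "dist z t < \<delta>" if "0 < \<phi> t z" for t z
      using that denom_pos[of z] unfolding \<phi>_def \<psi>_def by (auto simp: zero_less_divide_iff)
  qed
qed

lemma distr_fst_density_pair:
  assumes "sigma_finite_measure M2" and h: "case_prod h \<in> borel_measurable (M1 \<Otimes>\<^sub>M M2)"
    and "AE x in M1. (\<integral>\<^sup>+y. h x y \<partial>M2) = 1"
  shows "distr (density (M1 \<Otimes>\<^sub>M M2) (case_prod h)) M1 fst = M1"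
proof (rule measure_eqI)
  fix A assume "A \<in> sets (distr (density (M1 \<Otimes>\<^sub>M M2) (case_prod h)) M1 fst)"
  then have A: "A \<in> sets M1" by simp
  have "emeasure (distr (density (M1 \<Otimes>\<^sub>M M2) (case_prod h)) M1 fst) A
      = (\<integral>\<^sup>+xy. case_prod h xy * indicator (A \<times> space M2) xy \<partial>(M1 \<Otimes>\<^sub>M M2))"
    using A h by (simp add: emeasure_distr emeasure_density space_pair_measure
        sets.sets_into_space vimage_fst Times_Int_Times flip: Sigma_Int_distrib1 Int_assoc)
  also have "\<dots> = (\<integral>\<^sup>+x. \<integral>\<^sup>+y. h x y * indicator A x \<partial>M2 \<partial>M1)"
    using A h by (subst sigma_finite_measure.nn_integral_fst[OF assms(1), symmetric])
      (auto intro!: nn_integral_cong simp: indicator_times)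
  also have "\<dots> = (\<integral>\<^sup>+x. indicator A x \<partial>M1)"
  proof (rule nn_integral_cong_AE)
    show "AE x in M1. (\<integral>\<^sup>+y. h x y * indicator A x \<partial>M2) = indicator A x"
      using AE_space assms(3)
    proof eventually_elim
      case (elim x)
      then show ?case using measurable_Pair2[OF h elim(1)] by (simp add: nn_integral_multc)
    qed
  qed
  finally show "emeasure (distr (density (M1 \<Otimes>\<^sub>M M2) (case_prod h)) M1 fst) A = emeasure M1 A"
    using A by simp
qed simp

lemma distr_snd_density_pair:
  assumes "pair_sigma_finite M1 M2" and h: "case_prod h \<in> borel_measurable (M1 \<Otimes>\<^sub>M M2)"
    and "AE y in M2. (\<integral>\<^sup>+x. h x y \<partial>M1) = 1"
  shows "distr (density (M1 \<Otimes>\<^sub>M M2) (case_prod h)) M2 snd = M2"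
proof (rule measure_eqI)
  fix A assume "A \<in> sets (distr (density (M1 \<Otimes>\<^sub>M M2) (case_prod h)) M2 snd)"
  then have A: "A \<in> sets M2" by simp
  have "emeasure (distr (density (M1 \<Otimes>\<^sub>M M2) (case_prod h)) M2 snd) A
      = (\<integral>\<^sup>+xy. case_prod h xy * indicator (space M1 \<times> A) xy \<partial>(M1 \<Otimes>\<^sub>M M2))"
    using A h by (simp add: emeasure_distr emeasure_density space_pair_measure
        sets.sets_into_space vimage_snd Times_Int_Times flip: Sigma_Int_distrib1 Int_assoc)
  also have "\<dots> = (\<integral>\<^sup>+y. \<integral>\<^sup>+x. h x y * indicator A y \<partial>M1 \<partial>M2)"
    using A h by (subst pair_sigma_finite.nn_integral_snd[OF assms(1), symmetric])
      (auto intro!: nn_integral_cong simp: indicator_times)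
  also have "\<dots> = (\<integral>\<^sup>+y. indicator A y \<partial>M2)"
  proof (rule nn_integral_cong_AE)
    show "AE y in M2. (\<integral>\<^sup>+x. h x y * indicator A y \<partial>M1) = indicator A y"
      using AE_space assms(3)
    proof eventually_elim
      case (elim y)
      then show ?case using measurable_Pair1[OF h elim(1)] by (simp add: nn_integral_multc)
    qed
  qed
  finally show "emeasure (distr (density (M1 \<Otimes>\<^sub>M M2) (case_prod h)) M2 snd) A = emeasure M2 A"
    using A by simp
qed simp

lemma sets_pair_measure_borel:
  fixes M1 :: "'a::second_countable_topology measure" and M2 :: "'b::second_countable_topology measure"
  assumes "sets M1 = sets borel" "sets M2 = sets borel"
  shows "sets (M1 \<Otimes>\<^sub>M M2) = sets borel"
  using sets_pair_measure_cong[OF assms] by (simp only: borel_prod)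

lemma density_in_couplings:
  fixes \<nu>1 \<nu>2 :: "complex measure" and h :: "complex \<Rightarrow> complex \<Rightarrow> ennreal"
  assumes "prob_space \<nu>1" "prob_space \<nu>2" "sets \<nu>1 = sets borel" "sets \<nu>2 = sets borel"
    and h: "case_prod h \<in> borel_measurable (\<nu>1 \<Otimes>\<^sub>M \<nu>2)"
    and "AE z in \<nu>1. (\<integral>\<^sup>+w. h z w \<partial>\<nu>2) = 1" "AE w in \<nu>2. (\<integral>\<^sup>+z. h z w \<partial>\<nu>1) = 1"
  shows "density (\<nu>1 \<Otimes>\<^sub>M \<nu>2) (case_prod h) \<in> couplings \<nu>1 \<nu>2"
proof -
  interpret P1: prob_space \<nu>1 by fact
  interpret P2: prob_space \<nu>2 by fact
  interpret pair_sigma_finite \<nu>1 \<nu>2 by unfold_locales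
  define \<gamma> where "\<gamma> = density (\<nu>1 \<Otimes>\<^sub>M \<nu>2) (case_prod h)"
  have sets_\<gamma>: "sets \<gamma> = sets borel"
    unfolding \<gamma>_def sets_density using assms(3,4) by (rule sets_pair_measure_borel)
  have "distr \<gamma> borel fst = distr \<gamma> \<nu>1 fst"
    using assms(3) by (intro distr_cong) simp_all
  then have fst: "distr \<gamma> borel fst = \<nu>1"
    using distr_fst_density_pair[OF P2.sigma_finite_measure_axioms h assms(6)] by (simp add: \<gamma>_def)
  have "distr \<gamma> borel snd = distr \<gamma> \<nu>2 snd"
    using assms(4) by (intro distr_cong) simp_all
  then have snd: "distr \<gamma> borel snd = \<nu>2"
    using distr_snd_density_pair[OF pair_sigma_finite_axioms h assms(7)] by (simp add: \<gamma>_def)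
  have "fst \<in> \<gamma> \<rightarrow>\<^sub>M borel"
    unfolding measurable_cong_sets[OF sets_\<gamma> refl]
    by (intro borel_measurable_continuous_onI continuous_intros)
  then have "emeasure \<gamma> (space \<gamma>) = emeasure (distr \<gamma> borel fst) UNIV"
    by (simp add: emeasure_distr)
  then have "prob_space \<gamma>"
    using fst P1.emeasure_space_1 sets_eq_imp_space_eq[OF assms(3)] by (intro prob_spaceI) simp
  with sets_\<gamma> fst snd show ?thesis
    unfolding couplings_def \<gamma>_def by blast
qed

locale finite_partition_of_unity =
  fixes S :: "'b::topological_space set" and T :: "'t set" and \<phi> :: "'t \<Rightarrow> 'b \<Rightarrow> real"
  assumes finite_T: "finite T"
    and measurable_\<phi> [measurable]: "\<And>t. \<phi> t \<in> borel_measurable borel"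
    and \<phi>_nonneg: "\<And>t z. 0 \<le> \<phi> t z"
    and sum_\<phi>: "\<And>z. z \<in> S \<Longrightarrow> (\<Sum>t\<in>T. \<phi> t z) = 1"
begin

lemma \<phi>_le_1: "t \<in> T \<Longrightarrow> z \<in> S \<Longrightarrow> \<phi> t z \<le> 1"
  using member_le_sum[of t T "\<lambda>t. \<phi> t z"] finite_T \<phi>_nonneg sum_\<phi> by simp

lemma integral_\<phi>_nonneg: "0 \<le> (\<integral>z. \<phi> t z \<partial>\<nu>)"
  by (simp add: \<phi>_nonneg)

context
  fixes \<nu> :: "'b measure"
  assumes prob: "prob_space \<nu>" and sets: "sets \<nu> = sets borel" and AE_in_S: "AE z in \<nu>. z \<in> S"
begin

interpretation prob_space \<nu> by (rule prob)

lemma measurable_\<phi>_on: "\<phi> t \<in> borel_measurable \<nu>"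
  unfolding measurable_cong_sets[OF sets refl] by (rule measurable_\<phi>)

lemma integrable_\<phi>: "t \<in> T \<Longrightarrow> integrable \<nu> (\<phi> t)"
  by (rule integrable_const_bound[where B=1])
    (use AE_in_S \<phi>_le_1 \<phi>_nonneg measurable_\<phi>_on in \<open>auto elim: AE_mp\<close>)

lemma integrable_sum_\<phi>: "integrable \<nu> (\<lambda>z. \<Sum>t\<in>T. c t * \<phi> t z)"
  using integrable_\<phi> by auto

lemma integral_sum_\<phi>: "(\<integral>z. (\<Sum>t\<in>T. c t * \<phi> t z) \<partial>\<nu>) = (\<Sum>t\<in>T. c t * (\<integral>z. \<phi> t z \<partial>\<nu>))"
  using integrable_\<phi> by (simp add: Bochner_Integration.integral_sum)

lemma sum_integral_\<phi>: "(\<Sum>t\<in>T. \<integral>z. \<phi> t z \<partial>\<nu>) = 1"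
proof -
  have "(\<Sum>t\<in>T. \<integral>z. \<phi> t z \<partial>\<nu>) = (\<integral>z. (\<Sum>t\<in>T. 1 * \<phi> t z) \<partial>\<nu>)"
    using integral_sum_\<phi>[of "\<lambda>_. 1"] by simp
  also have "\<dots> = (\<integral>z. 1 \<partial>\<nu>)"
    using AE_in_S sum_\<phi> by (intro integral_cong_AE) (auto intro: borel_measurable_sum measurable_\<phi>_on)
  finally show ?thesis by (simp add: prob_space)
qed

end

end

locale partition_coupling = finite_partition_of_unity S T \<phi>
  for S :: "'b::topological_space set" and T :: "'t set" and \<phi> +
  fixes \<nu>1 \<nu>2 :: "'b measure" and \<eta> :: real
  assumes prob1: "prob_space \<nu>1" and sets1 [measurable_cong]: "sets \<nu>1 = sets borel"
    and AE_in_S1: "AE z in \<nu>1. z \<in> S"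
    and prob2: "prob_space \<nu>2" and sets2 [measurable_cong]: "sets \<nu>2 = sets borel"
    and AE_in_S2: "AE w in \<nu>2. w \<in> S"
    and \<eta>_pos: "0 < \<eta>" and \<eta>_le_1: "\<eta> \<le> 1"

sublocale partition_coupling \<subseteq> P1: prob_space \<nu>1 by (rule prob1)
sublocale partition_coupling \<subseteq> P2: prob_space \<nu>2 by (rule prob2)

context partition_coupling
begin

text \<open>
  \<open>plan 1 (1 / residual)\<close> is the density of a coupling of \<open>\<nu>1\<close> and \<open>\<nu>2\<close>: the mass \<open>common t\<close>
  is transported within the cell \<open>\<phi> t\<close>, and the remaining mass, with densities \<open>rest1\<close> and
  \<open>rest2\<close> of total \<open>residual \<ge> \<eta>\<close>, is coupled independently. When \<open>mass1 t * mass2 t = 0\<close>,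
  the division gives \<open>coef t = 0\<close>, which is correct since then \<open>common t = 0\<close>.
\<close>

definition mass1 :: "'t \<Rightarrow> real" where "mass1 t = (\<integral>z. \<phi> t z \<partial>\<nu>1)"
definition mass2 :: "'t \<Rightarrow> real" where "mass2 t = (\<integral>w. \<phi> t w \<partial>\<nu>2)"
definition common :: "'t \<Rightarrow> real" where "common t = (1 - \<eta>) * min (mass1 t) (mass2 t)"
definition coef :: "'t \<Rightarrow> real" where "coef t = common t / (mass1 t * mass2 t)"
definition residual :: real where "residual = 1 - (\<Sum>t\<in>T. common t)"
definition rest1 :: "'b \<Rightarrow> real" where "rest1 z = 1 - (\<Sum>t\<in>T. coef t * mass2 t * \<phi> t z)"
definition rest2 :: "'b \<Rightarrow> real" where "rest2 w = 1 - (\<Sum>t\<in>T. coef t * mass1 t * \<phi> t w)"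
definition plan :: "real \<Rightarrow> real \<Rightarrow> 'b \<Rightarrow> 'b \<Rightarrow> real" where
  "plan \<alpha> \<beta> z w = \<alpha> * (\<Sum>t\<in>T. coef t * \<phi> t z * \<phi> t w) + \<beta> * rest1 z * rest2 w"

lemma mass1_nonneg: "0 \<le> mass1 t"
  unfolding mass1_def by (rule integral_\<phi>_nonneg)

lemma mass2_nonneg: "0 \<le> mass2 t"
  unfolding mass2_def by (rule integral_\<phi>_nonneg)

lemma common_nonneg: "0 \<le> common t"
  using mass1_nonneg mass2_nonneg \<eta>_le_1 by (simp add: common_def)

lemma common_le_min: "common t \<le> min (mass1 t) (mass2 t)"
  unfolding common_def using mass1_nonneg[of t] mass2_nonneg[of t] \<eta>_pos \<eta>_le_1
  by (intro mult_left_le_one_le) auto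

lemma common_le_mass1: "common t \<le> mass1 t" and common_le_mass2: "common t \<le> mass2 t"
  using common_le_min[of t] by auto

lemma coef_nonneg: "0 \<le> coef t"
  using common_nonneg mass1_nonneg mass2_nonneg by (simp add: coef_def)

lemma coef_mass1_mass2: "coef t * mass1 t * mass2 t = common t"
proof (cases "mass1 t * mass2 t = 0")
  case True
  then have "min (mass1 t) (mass2 t) = 0"
    using mass1_nonneg[of t] mass2_nonneg[of t] by auto
  then show ?thesis by (simp add: coef_def common_def)
qed (simp add: coef_def)

lemma coef_mass1_le_1: "coef t * mass1 t \<le> 1"
proof (cases "mass1 t = 0 \<or> mass2 t = 0")
  case False
  then have "coef t * mass1 t = common t / mass2 t" by (simp add: coef_def)
  then show ?thesis using False common_le_mass2[of t] mass2_nonneg[of t] by (simp add: divide_le_eq_1)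
qed (auto simp: coef_def)

lemma coef_mass2_le_1: "coef t * mass2 t \<le> 1"
proof (cases "mass1 t = 0 \<or> mass2 t = 0")
  case False
  then have "coef t * mass2 t = common t / mass1 t" by (simp add: coef_def)
  then show ?thesis using False common_le_mass1[of t] mass1_nonneg[of t] by (simp add: divide_le_eq_1)
qed (auto simp: coef_def)

lemma residual_ge_\<eta>: "\<eta> \<le> residual"
proof -
  have "(\<Sum>t\<in>T. common t) \<le> (\<Sum>t\<in>T. (1 - \<eta>) * mass2 t)"
    using \<eta>_le_1 by (intro sum_mono) (simp add: common_def mult_left_mono)
  also have "\<dots> = 1 - \<eta>"
    by (simp add: mass2_def sum_distrib_left[symmetric] sum_integral_\<phi>[OF prob2 sets2 AE_in_S2])
  finally show ?thesis by (simp add: residual_def)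
qed

lemma residual_pos: "0 < residual"
  using residual_ge_\<eta> \<eta>_pos by linarith

lemma residual_le: "residual \<le> \<eta> + (\<Sum>t\<in>T. \<bar>mass1 t - mass2 t\<bar>)"
proof -
  define D where "D = (\<Sum>t\<in>T. \<bar>mass1 t - mass2 t\<bar>)"
  have "1 - D = (\<Sum>t\<in>T. mass2 t - \<bar>mass1 t - mass2 t\<bar>)"
    by (simp add: D_def sum_subtractf mass2_def sum_integral_\<phi>[OF prob2 sets2 AE_in_S2])
  also have "\<dots> \<le> (\<Sum>t\<in>T. min (mass1 t) (mass2 t))"
    by (intro sum_mono) auto
  finally have "(1 - \<eta>) * (1 - D) \<le> (\<Sum>t\<in>T. common t)"
    using \<eta>_le_1 by (simp add: common_def sum_distrib_left[symmetric] mult_left_mono)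
  moreover have "0 \<le> \<eta> * D" using \<eta>_pos by (simp add: D_def sum_nonneg)
  ultimately show ?thesis by (simp add: residual_def D_def[symmetric] algebra_simps)
qed

lemma rest1_nonneg: "z \<in> S \<Longrightarrow> 0 \<le> rest1 z"
proof -
  assume z: "z \<in> S"
  have "(\<Sum>t\<in>T. coef t * mass2 t * \<phi> t z) \<le> (\<Sum>t\<in>T. \<phi> t z)"
    using coef_mass2_le_1 coef_nonneg mass2_nonneg \<phi>_nonneg by (intro sum_mono mult_left_le_one_le) auto
  then show ?thesis using sum_\<phi>[OF z] by (simp add: rest1_def)
qed

lemma rest2_nonneg: "w \<in> S \<Longrightarrow> 0 \<le> rest2 w"
proof -
  assume w: "w \<in> S"
  have "(\<Sum>t\<in>T. coef t * mass1 t * \<phi> t w) \<le> (\<Sum>t\<in>T. \<phi> t w)"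
    using coef_mass1_le_1 coef_nonneg mass1_nonneg \<phi>_nonneg by (intro sum_mono mult_left_le_one_le) auto
  then show ?thesis using sum_\<phi>[OF w] by (simp add: rest2_def)
qed

lemma rest1_le_1: "rest1 z \<le> 1"
  using coef_nonneg mass2_nonneg \<phi>_nonneg by (auto simp: rest1_def intro!: sum_nonneg)

lemma integral_rest1: "(\<integral>z. rest1 z \<partial>\<nu>1) = residual"
proof -
  have "(\<integral>z. rest1 z \<partial>\<nu>1) = (\<integral>z. 1 \<partial>\<nu>1) - (\<integral>z. (\<Sum>t\<in>T. (coef t * mass2 t) * \<phi> t z) \<partial>\<nu>1)"
    unfolding rest1_def using integrable_sum_\<phi>[OF prob1 sets1 AE_in_S1]
    by (intro Bochner_Integration.integral_diff) auto
  also have "\<dots> = 1 - (\<Sum>t\<in>T. coef t * mass1 t * mass2 t)"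
    by (simp only: integral_sum_\<phi>[OF prob1 sets1 AE_in_S1] P1.prob_space mass1_def[symmetric])
      (simp add: mult_ac P1.prob_space P2.prob_space)
  finally show ?thesis by (simp add: coef_mass1_mass2 residual_def)
qed

lemma integral_rest2: "(\<integral>w. rest2 w \<partial>\<nu>2) = residual"
proof -
  have "(\<integral>w. rest2 w \<partial>\<nu>2) = (\<integral>w. 1 \<partial>\<nu>2) - (\<integral>w. (\<Sum>t\<in>T. (coef t * mass1 t) * \<phi> t w) \<partial>\<nu>2)"
    unfolding rest2_def using integrable_sum_\<phi>[OF prob2 sets2 AE_in_S2]
    by (intro Bochner_Integration.integral_diff) auto
  also have "\<dots> = 1 - (\<Sum>t\<in>T. coef t * mass1 t * mass2 t)"
    by (simp only: integral_sum_\<phi>[OF prob2 sets2 AE_in_S2] P2.prob_space mass2_def[symmetric])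
      (simp add: mult_ac P1.prob_space P2.prob_space)
  finally show ?thesis by (simp add: coef_mass1_mass2 residual_def)
qed

lemma measurable_plan [measurable]: "case_prod (plan \<alpha> \<beta>) \<in> borel_measurable (\<nu>1 \<Otimes>\<^sub>M \<nu>2)"
  unfolding plan_def rest1_def rest2_def by measurable

lemma integrable_rest1: "integrable \<nu>1 rest1"
  unfolding rest1_def using integrable_sum_\<phi>[OF prob1 sets1 AE_in_S1] by auto

lemma integrable_rest2: "integrable \<nu>2 rest2"
  unfolding rest2_def using integrable_sum_\<phi>[OF prob2 sets2 AE_in_S2] by auto

lemma integral_plan_snd: "(\<integral>w. plan \<alpha> \<beta> z w \<partial>\<nu>2) = \<alpha> * (1 - rest1 z) + \<beta> * residual * rest1 z"
proof -
  have "(\<integral>w. plan \<alpha> \<beta> z w \<partial>\<nu>2)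
      = (\<integral>w. (\<Sum>t\<in>T. (\<alpha> * coef t * \<phi> t z) * \<phi> t w) + (\<beta> * rest1 z) * rest2 w \<partial>\<nu>2)"
    by (simp add: plan_def sum_distrib_left mult_ac)
  also have "\<dots> = (\<Sum>t\<in>T. (\<alpha> * coef t * \<phi> t z) * mass2 t) + (\<beta> * rest1 z) * residual"
    using integrable_sum_\<phi>[OF prob2 sets2 AE_in_S2] integrable_rest2
    by (simp add: integral_sum_\<phi>[OF prob2 sets2 AE_in_S2] integral_rest2 mass2_def)
  also have "(\<Sum>t\<in>T. (\<alpha> * coef t * \<phi> t z) * mass2 t) = \<alpha> * (1 - rest1 z)"
    by (simp add: rest1_def sum_distrib_left mult_ac)
  finally show ?thesis by (simp add: mult_ac)
qed

lemma integral_plan_fst: "(\<integral>z. plan \<alpha> \<beta> z w \<partial>\<nu>1) = \<alpha> * (1 - rest2 w) + \<beta> * residual * rest2 w"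
proof -
  have "(\<integral>z. plan \<alpha> \<beta> z w \<partial>\<nu>1)
      = (\<integral>z. (\<Sum>t\<in>T. (\<alpha> * coef t * \<phi> t w) * \<phi> t z) + (\<beta> * rest2 w) * rest1 z \<partial>\<nu>1)"
    by (simp add: plan_def sum_distrib_left mult_ac)
  also have "\<dots> = (\<Sum>t\<in>T. (\<alpha> * coef t * \<phi> t w) * mass1 t) + (\<beta> * rest2 w) * residual"
    using integrable_sum_\<phi>[OF prob1 sets1 AE_in_S1] integrable_rest1
    by (simp add: integral_sum_\<phi>[OF prob1 sets1 AE_in_S1] integral_rest1 mass1_def)
  also have "(\<Sum>t\<in>T. (\<alpha> * coef t * \<phi> t w) * mass1 t) = \<alpha> * (1 - rest2 w)"
    by (simp add: rest2_def sum_distrib_left mult_ac)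
  finally show ?thesis by (simp add: mult_ac)
qed

lemma plan_nonneg: "0 \<le> \<alpha> \<Longrightarrow> 0 \<le> \<beta> \<Longrightarrow> z \<in> S \<Longrightarrow> w \<in> S \<Longrightarrow> 0 \<le> plan \<alpha> \<beta> z w"
  unfolding plan_def using coef_nonneg \<phi>_nonneg rest1_nonneg rest2_nonneg
  by (intro add_nonneg_nonneg mult_nonneg_nonneg sum_nonneg) auto

lemma nn_integral_plan_snd:
  assumes "0 \<le> \<alpha>" "0 \<le> \<beta>" "z \<in> S"
  shows "(\<integral>\<^sup>+w. ennreal (plan \<alpha> \<beta> z w) \<partial>\<nu>2) = ennreal (\<alpha> * (1 - rest1 z) + \<beta> * residual * rest1 z)"
proof -
  have "integrable \<nu>2 (plan \<alpha> \<beta> z)"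
    unfolding plan_def using integrable_sum_\<phi>[OF prob2 sets2 AE_in_S2] integrable_rest2
    by (simp add: sum_distrib_left mult.assoc[symmetric])
  moreover have "AE w in \<nu>2. 0 \<le> plan \<alpha> \<beta> z w"
    using AE_in_S2 by eventually_elim (use assms plan_nonneg in auto)
  ultimately show ?thesis by (simp add: nn_integral_eq_integral integral_plan_snd)
qed

lemma nn_integral_plan_fst:
  assumes "0 \<le> \<alpha>" "0 \<le> \<beta>" "w \<in> S"
  shows "(\<integral>\<^sup>+z. ennreal (plan \<alpha> \<beta> z w) \<partial>\<nu>1) = ennreal (\<alpha> * (1 - rest2 w) + \<beta> * residual * rest2 w)"
proof -
  have "integrable \<nu>1 (\<lambda>z. plan \<alpha> \<beta> z w)"
    unfolding plan_def using integrable_sum_\<phi>[OF prob1 sets1 AE_in_S1] integrable_rest1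
    by (simp add: sum_distrib_left sum_distrib_right mult.assoc[symmetric] mult.commute[of _ "\<phi> _ w"])
  moreover have "AE z in \<nu>1. 0 \<le> plan \<alpha> \<beta> z w"
    using AE_in_S1 by eventually_elim (use assms plan_nonneg in auto)
  ultimately show ?thesis by (simp add: nn_integral_eq_integral integral_plan_fst)
qed

lemma nn_integral_nn_integral_plan:
  assumes "0 \<le> \<alpha>" "0 \<le> \<beta>"
  shows "(\<integral>\<^sup>+z. \<integral>\<^sup>+w. ennreal (plan \<alpha> \<beta> z w) \<partial>\<nu>2 \<partial>\<nu>1) = ennreal (\<alpha> * (1 - residual) + \<beta> * residual\<^sup>2)"
proof -
  have "(\<integral>\<^sup>+z. \<integral>\<^sup>+w. ennreal (plan \<alpha> \<beta> z w) \<partial>\<nu>2 \<partial>\<nu>1)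
      = (\<integral>\<^sup>+z. ennreal (\<alpha> * (1 - rest1 z) + \<beta> * residual * rest1 z) \<partial>\<nu>1)"
  proof (rule nn_integral_cong_AE)
    show "AE z in \<nu>1. (\<integral>\<^sup>+w. ennreal (plan \<alpha> \<beta> z w) \<partial>\<nu>2)
        = ennreal (\<alpha> * (1 - rest1 z) + \<beta> * residual * rest1 z)"
      using AE_in_S1 by eventually_elim (simp add: assms nn_integral_plan_snd)
  qed
  also have "\<dots> = ennreal (\<integral>z. \<alpha> * (1 - rest1 z) + \<beta> * residual * rest1 z \<partial>\<nu>1)"
  proof (rule nn_integral_eq_integral)
    show "integrable \<nu>1 (\<lambda>z. \<alpha> * (1 - rest1 z) + \<beta> * residual * rest1 z)"
      using integrable_rest1 by auto
    show "AE z in \<nu>1. 0 \<le> \<alpha> * (1 - rest1 z) + \<beta> * residual * rest1 z"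
      using AE_in_S1 by eventually_elim
        (use assms rest1_le_1 rest1_nonneg residual_pos in \<open>auto intro!: add_nonneg_nonneg\<close>)
  qed
  also have "(\<integral>z. \<alpha> * (1 - rest1 z) + \<beta> * residual * rest1 z \<partial>\<nu>1) = \<alpha> * (1 - residual) + \<beta> * residual\<^sup>2"
    using integrable_rest1 by (simp add: integral_rest1 P1.prob_space power2_eq_square algebra_simps)
  finally show ?thesis .
qed

lemma inverse_residual: "0 \<le> 1 / residual" "1 / residual * residual = 1"
  using residual_pos by auto

lemma AE_nn_integral_plan_snd: "AE z in \<nu>1. (\<integral>\<^sup>+w. ennreal (plan 1 (1 / residual) z w) \<partial>\<nu>2) = 1"
  using AE_in_S1
proof eventually_elim
  case (elim z)
  have "(\<integral>\<^sup>+w. ennreal (plan 1 (1 / residual) z w) \<partial>\<nu>2)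
      = ennreal (1 * (1 - rest1 z) + 1 / residual * residual * rest1 z)"
    using elim inverse_residual by (intro nn_integral_plan_snd) auto
  then show ?case by (simp only: inverse_residual) simp
qed

lemma AE_nn_integral_plan_fst: "AE w in \<nu>2. (\<integral>\<^sup>+z. ennreal (plan 1 (1 / residual) z w) \<partial>\<nu>1) = 1"
  using AE_in_S2
proof eventually_elim
  case (elim w)
  have "(\<integral>\<^sup>+z. ennreal (plan 1 (1 / residual) z w) \<partial>\<nu>1)
      = ennreal (1 * (1 - rest2 w) + 1 / residual * residual * rest2 w)"
    using elim inverse_residual by (intro nn_integral_plan_fst) auto
  then show ?case by (simp only: inverse_residual) simp
qed

lemma plan_mult_cost_le:
  assumes "z \<in> S" "w \<in> S" and "0 \<le> c" "c \<le> C"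
    and local: "\<And>t. t \<in> T \<Longrightarrow> 0 < \<phi> t z \<Longrightarrow> 0 < \<phi> t w \<Longrightarrow> c \<le> e"
  shows "plan 1 (1 / residual) z w * c \<le> plan e (C / residual) z w"
proof -
  have "coef t * \<phi> t z * \<phi> t w * c \<le> e * (coef t * \<phi> t z * \<phi> t w)" if "t \<in> T" for t
  proof (cases "0 < \<phi> t z \<and> 0 < \<phi> t w")
    case True
    then have "c \<le> e" using local[OF that] by auto
    from mult_left_mono[OF this, of "coef t * \<phi> t z * \<phi> t w"] show ?thesis
      using coef_nonneg[of t] \<phi>_nonneg[of t] by (simp add: mult_ac)
  next
    case False
    then have "\<phi> t z = 0 \<or> \<phi> t w = 0" using \<phi>_nonneg[of t z] \<phi>_nonneg[of t w] by auto
    then show ?thesis by auto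
  qed
  then have "(\<Sum>t\<in>T. coef t * \<phi> t z * \<phi> t w) * c \<le> e * (\<Sum>t\<in>T. coef t * \<phi> t z * \<phi> t w)"
    by (simp add: sum_distrib_left sum_distrib_right sum_mono)
  moreover have "rest1 z * rest2 w / residual * c \<le> rest1 z * rest2 w / residual * C"
    using assms rest1_nonneg rest2_nonneg residual_pos by (intro mult_left_mono) auto
  ultimately show ?thesis by (simp add: plan_def algebra_simps)
qed

lemma nn_integral_plan_cost_le:
  assumes c: "case_prod c \<in> borel_measurable (\<nu>1 \<Otimes>\<^sub>M \<nu>2)"
    and "0 \<le> e" "0 \<le> C"
    and c_bounds: "\<And>z w. z \<in> S \<Longrightarrow> w \<in> S \<Longrightarrow> 0 \<le> c z w \<and> c z w \<le> C"
    and c_local: "\<And>t z w. t \<in> T \<Longrightarrow> z \<in> S \<Longrightarrow> w \<in> S \<Longrightarrow> 0 < \<phi> t z \<Longrightarrow> 0 < \<phi> t w \<Longrightarrow> c z w \<le> e"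
  shows "(\<integral>\<^sup>+x. ennreal (case_prod (plan 1 (1 / residual)) x) * ennreal (case_prod c x) \<partial>(\<nu>1 \<Otimes>\<^sub>M \<nu>2))
      \<le> ennreal (e + C * (\<eta> + (\<Sum>t\<in>T. \<bar>mass1 t - mass2 t\<bar>)))"
proof -
  have "(\<integral>\<^sup>+x. ennreal (case_prod (plan 1 (1 / residual)) x) * ennreal (case_prod c x) \<partial>(\<nu>1 \<Otimes>\<^sub>M \<nu>2))
      = (\<integral>\<^sup>+z. \<integral>\<^sup>+w. ennreal (plan 1 (1 / residual) z w) * ennreal (c z w) \<partial>\<nu>2 \<partial>\<nu>1)"
    using c by (subst P2.nn_integral_fst[symmetric]) auto
  also have "\<dots> \<le> (\<integral>\<^sup>+z. \<integral>\<^sup>+w. ennreal (plan e (C / residual) z w) \<partial>\<nu>2 \<partial>\<nu>1)"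
  proof (rule nn_integral_mono_AE)
    show "AE z in \<nu>1. (\<integral>\<^sup>+w. ennreal (plan 1 (1 / residual) z w) * ennreal (c z w) \<partial>\<nu>2)
        \<le> (\<integral>\<^sup>+w. ennreal (plan e (C / residual) z w) \<partial>\<nu>2)"
      using AE_in_S1
    proof eventually_elim
      case (elim z)
      show ?case
      proof (rule nn_integral_mono_AE)
        show "AE w in \<nu>2. ennreal (plan 1 (1 / residual) z w) * ennreal (c z w)
            \<le> ennreal (plan e (C / residual) z w)"
          using AE_in_S2
        proof eventually_elim
          case (elim w)
          with \<open>z \<in> S\<close> have "plan 1 (1 / residual) z w * c z w \<le> plan e (C / residual) z w"
            using c_bounds c_local by (intro plan_mult_cost_le) auto
          then show ?case
            using \<open>z \<in> S\<close> elim c_bounds residual_pos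
            by (simp add: ennreal_mult'[symmetric] plan_nonneg ennreal_leI)
        qed
      qed
    qed
  qed
  also have "\<dots> = ennreal (e * (1 - residual) + C * residual)"
    using assms residual_pos by (simp add: nn_integral_nn_integral_plan power2_eq_square)
  also have "\<dots> \<le> ennreal (e + C * (\<eta> + (\<Sum>t\<in>T. \<bar>mass1 t - mass2 t\<bar>)))"
  proof (intro ennreal_leI add_mono mult_left_mono)
    show "e * (1 - residual) \<le> e" using \<open>0 \<le> e\<close> residual_pos by (simp add: algebra_simps)
  qed (use \<open>0 \<le> C\<close> residual_le in auto)
  finally show ?thesis .
qed

end

section \<open>Wasserstein distance on the circle controlled by test integrals\<close>

lemma Wpp_S1_le_partition:
  fixes \<nu>1 \<nu>2 :: "complex measure" and \<phi> :: "'t \<Rightarrow> complex \<Rightarrow> real"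
  assumes "prob_space \<nu>1" "sets \<nu>1 = sets borel" "AE z in \<nu>1. cmod z = 1"
    and "prob_space \<nu>2" "sets \<nu>2 = sets borel" "AE z in \<nu>2. cmod z = 1"
    and "finite T" "\<And>t. \<phi> t \<in> borel_measurable borel" "\<And>t z. 0 \<le> \<phi> t z"
    and "\<And>z. cmod z = 1 \<Longrightarrow> (\<Sum>t\<in>T. \<phi> t z) = 1"
    and local: "\<And>t z w. t \<in> T \<Longrightarrow> cmod z = 1 \<Longrightarrow> cmod w = 1 \<Longrightarrow> 0 < \<phi> t z \<Longrightarrow> 0 < \<phi> t w
        \<Longrightarrow> dS1 z w powr p \<le> e"
    and "0 \<le> e" "0 < \<eta>" "\<eta> \<le> 1" "0 \<le> p"
  shows "Wpp_S1 p \<nu>1 \<nu>2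
    \<le> ennreal (e + pi powr p * (\<eta> + (\<Sum>t\<in>T. \<bar>(\<integral>z. \<phi> t z \<partial>\<nu>1) - (\<integral>z. \<phi> t z \<partial>\<nu>2)\<bar>)))"
proof -
  interpret partition_coupling "sphere 0 1" T \<phi> \<nu>1 \<nu>2 \<eta>
    proof (intro partition_coupling.intro finite_partition_of_unity.intro partition_coupling_axioms.intro)
    show "AE z in \<nu>1. z \<in> sphere 0 1" "AE z in \<nu>2. z \<in> sphere 0 1"
      using assms(3,6) by simp_all
    show "(\<Sum>t\<in>T. \<phi> t z) = 1" if "z \<in> sphere 0 1" for z
      using assms(10) that by simp
  qed (fact assms)+
  have [measurable]: "(\<lambda>x. dS1 (fst x) (snd x)) \<in> borel_measurable (\<nu>1 \<Otimes>\<^sub>M \<nu>2)"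
    unfolding measurable_cong_sets[OF sets_pair_measure_borel[OF sets1 sets2] refl]
    using borel_measurable_dS1 by (simp add: case_prod_beta')
  define \<gamma> where "\<gamma> = density (\<nu>1 \<Otimes>\<^sub>M \<nu>2) (\<lambda>(z, w). ennreal (plan 1 (1 / residual) z w))"
  have "\<gamma> \<in> couplings \<nu>1 \<nu>2"
    unfolding \<gamma>_def using AE_nn_integral_plan_snd AE_nn_integral_plan_fst
    by (intro density_in_couplings prob1 prob2 sets1 sets2) auto
  then have "Wpp_S1 p \<nu>1 \<nu>2 \<le> (\<integral>\<^sup>+x. ennreal (dS1 (fst x) (snd x) powr p) \<partial>\<gamma>)"
    unfolding Wpp_S1_def by (rule INF_lower)
  also have "\<dots> = (\<integral>\<^sup>+x. ennreal (case_prod (plan 1 (1 / residual)) x)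
      * ennreal (case_prod (\<lambda>z w. dS1 z w powr p) x) \<partial>(\<nu>1 \<Otimes>\<^sub>M \<nu>2))"
    unfolding \<gamma>_def by (subst nn_integral_density) (auto simp: case_prod_beta)
  also have "\<dots> \<le> ennreal (e + pi powr p * (\<eta> + (\<Sum>t\<in>T. \<bar>mass1 t - mass2 t\<bar>)))"
  proof (rule nn_integral_plan_cost_le)
    show "(\<lambda>(z, w). dS1 z w powr p) \<in> borel_measurable (\<nu>1 \<Otimes>\<^sub>M \<nu>2)"
      by measurable
    show "0 \<le> dS1 z w powr p \<and> dS1 z w powr p \<le> pi powr p"
      if "z \<in> sphere 0 1" "w \<in> sphere 0 1" for z w
      using dS1_bounds[of z w] that \<open>0 \<le> p\<close> by (auto intro: powr_mono2)
  qed (use local assms in \<open>auto simp: mem_sphere_0\<close>)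
  finally show ?thesis by (simp add: mass1_def mass2_def)
qed

lemma Wpp_S1_le_test_integrals:
  assumes "0 < p" "0 < e" "0 < \<eta>" "\<eta> \<le> 1"
  obtains T :: "complex set" and \<phi> :: "complex \<Rightarrow> complex \<Rightarrow> real"
  where "finite T" "\<And>t. continuous_on UNIV (\<phi> t)" "\<And>t z. 0 \<le> \<phi> t z" "\<And>t z. t \<in> T \<Longrightarrow> \<phi> t z \<le> 1"
    "\<And>\<nu>1 \<nu>2. prob_space \<nu>1 \<Longrightarrow> sets \<nu>1 = sets borel \<Longrightarrow> AE z in \<nu>1. cmod z = 1 \<Longrightarrow>
      prob_space \<nu>2 \<Longrightarrow> sets \<nu>2 = sets borel \<Longrightarrow> AE z in \<nu>2. cmod z = 1 \<Longrightarrow>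
      Wpp_S1 p \<nu>1 \<nu>2
        \<le> ennreal (e + pi powr p * (\<eta> + (\<Sum>t\<in>T. \<bar>(\<integral>z. \<phi> t z \<partial>\<nu>1) - (\<integral>z. \<phi> t z \<partial>\<nu>2)\<bar>)))"
proof -
  obtain c where "0 < c"
    and close: "\<And>z w. cmod z = 1 \<Longrightarrow> cmod w = 1 \<Longrightarrow> cmod (z - w) < c \<Longrightarrow> dS1 z w powr p \<le> e"
    using dS1_powr_le_if_close[OF assms(2,1)] by blast
  obtain T :: "complex set" and \<phi> :: "complex \<Rightarrow> complex \<Rightarrow> real"
    where T: "finite T" "\<And>t. continuous_on UNIV (\<phi> t)" "\<And>t z. 0 \<le> \<phi> t z"
      "\<And>t z. t \<in> T \<Longrightarrow> \<phi> t z \<le> 1" "\<And>z. z \<in> sphere 0 1 \<Longrightarrow> (\<Sum>t\<in>T. \<phi> t z) = 1"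
      and small: "\<And>t z. 0 < \<phi> t z \<Longrightarrow> dist z t < c / 2"
    using compact_partition_of_unity[OF compact_sphere[of "0::complex" 1] half_gt_zero[OF \<open>0 < c\<close>]]
    by blast
  have local: "dS1 z w powr p \<le> e"
    if "cmod z = 1" "cmod w = 1" "0 < \<phi> t z" "0 < \<phi> t w" for t z w
  proof (rule close[OF that(1,2)])
    have "dist z w \<le> dist z t + dist w t" by (rule dist_triangle2)
    then show "cmod (z - w) < c" using small[OF that(3)] small[OF that(4)] by (simp add: dist_norm)
  qed
  show thesis
  proof (rule that[OF T(1-4)])
    fix \<nu>1 \<nu>2 :: "complex measure"
    assume "prob_space \<nu>1" "sets \<nu>1 = sets borel" "AE z in \<nu>1. cmod z = 1"
      "prob_space \<nu>2" "sets \<nu>2 = sets borel" "AE z in \<nu>2. cmod z = 1"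
    then show "Wpp_S1 p \<nu>1 \<nu>2
        \<le> ennreal (e + pi powr p * (\<eta> + (\<Sum>t\<in>T. \<bar>(\<integral>z. \<phi> t z \<partial>\<nu>1) - (\<integral>z. \<phi> t z \<partial>\<nu>2)\<bar>)))"
      using T local assms by (intro Wpp_S1_le_partition) (auto intro: borel_measurable_continuous_onI)
  qed
qed

section \<open>Weak convergence of integrals along a normalised map\<close>

lemma (in prob_space) integral_tendsto_0_bounded:
  fixes f :: "nat \<Rightarrow> 'a \<Rightarrow> real"
  assumes "\<And>n. f n \<in> borel_measurable M" "\<And>n x. \<bar>f n x\<bar> \<le> B"
    and "AE x in M. (\<lambda>n. f n x) \<longlonglongrightarrow> 0"
  shows "(\<lambda>n. \<integral>x. f n x \<partial>M) \<longlonglongrightarrow> 0"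
proof -
  have "(\<lambda>n. \<integral>x. f n x \<partial>M) \<longlonglongrightarrow> (\<integral>x. 0 \<partial>M)"
    by (rule integral_dominated_convergence[where w="\<lambda>_. B"]) (use assms in auto)
  then show ?thesis by simp
qed

lemma integrable_bounded_borel:
  fixes f :: "'a::topological_space \<Rightarrow> real"
  assumes "prob_space M" "sets M = sets borel" "f \<in> borel_measurable borel" "bounded (range f)"
  shows "integrable M f"
proof -
  interpret prob_space M by fact
  obtain B where "\<And>x. \<bar>f x\<bar> \<le> B" using assms(4) by (auto simp: bounded_iff)
  then show ?thesis
    using assms(3) measurable_cong_sets[OF assms(2) refl] by (intro integrable_const_bound[where B=B]) auto
qed

lemma weak_conv_sph_integral_approx:
  fixes \<mu>s :: "nat \<Rightarrow> 'a::euclidean_space measure" and F :: "'a \<Rightarrow> real" and g h :: "nat \<Rightarrow> 'a \<Rightarrow> real"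
  assumes wc: "weak_conv_sph \<mu>s \<mu>"
    and \<mu>s: "\<And>k. prob_space (\<mu>s k)" "\<And>k. sets (\<mu>s k) = sets borel"
    and \<mu>: "prob_space \<mu>" "sets \<mu> = sets borel"
    and F: "F \<in> borel_measurable borel" "bounded (range F)"
    and g: "\<And>n. continuous_on UNIV (g n)" "\<And>n. bounded (range (g n))"
    and h: "\<And>n. continuous_on UNIV (h n)" "\<And>n. bounded (range (h n))"
    and approx: "\<And>n x. \<bar>F x - g n x\<bar> \<le> h n x"
    and h_lim: "(\<lambda>n. \<integral>x. h n x \<partial>\<mu>) \<longlonglongrightarrow> 0"
  shows "(\<lambda>k. \<integral>x. F x \<partial>\<mu>s k) \<longlonglongrightarrow> (\<integral>x. F x \<partial>\<mu>)"
proof (rule tendstoI)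
  fix \<epsilon> :: real assume "0 < \<epsilon>"
  have err: "\<bar>(\<integral>x. F x \<partial>M) - (\<integral>x. g n x \<partial>M)\<bar> \<le> (\<integral>x. h n x \<partial>M)"
    if "prob_space M" "sets M = sets borel" for M n
  proof -
    have "integrable M F" "integrable M (g n)" "integrable M (h n)"
      by (rule integrable_bounded_borel[OF that F],
          (rule integrable_bounded_borel[OF that borel_measurable_continuous_onI[OF g(1)] g(2)]),
          (rule integrable_bounded_borel[OF that borel_measurable_continuous_onI[OF h(1)] h(2)]))
    then have "(\<integral>x. F x \<partial>M) - (\<integral>x. g n x \<partial>M) = (\<integral>x. F x - g n x \<partial>M)"
      by simp
    moreover have "norm (\<integral>x. F x - g n x \<partial>M) \<le> (\<integral>x. h n x \<partial>M)"
      using \<open>integrable M F\<close> \<open>integrable M (g n)\<close> \<open>integrable M (h n)\<close> approx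
      by (intro Bochner_Integration.integral_norm_bound_integral) auto
    ultimately show ?thesis by simp
  qed
  obtain n where n: "(\<integral>x. h n x \<partial>\<mu>) < \<epsilon> / 4"
    using order_tendstoD(2)[OF h_lim, of "\<epsilon> / 4"] \<open>0 < \<epsilon>\<close> by (auto simp: eventually_sequentially)
  have "(\<lambda>k. \<integral>x. g n x \<partial>\<mu>s k) \<longlonglongrightarrow> (\<integral>x. g n x \<partial>\<mu>)" "(\<lambda>k. \<integral>x. h n x \<partial>\<mu>s k) \<longlonglongrightarrow> (\<integral>x. h n x \<partial>\<mu>)"
    using wc g h unfolding weak_conv_sph_def by blast+
  from this[THEN tendstoD, of "\<epsilon> / 4"] \<open>0 < \<epsilon>\<close>
  have "eventually (\<lambda>k. dist (\<integral>x. g n x \<partial>\<mu>s k) (\<integral>x. g n x \<partial>\<mu>) < \<epsilon> / 4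
      \<and> dist (\<integral>x. h n x \<partial>\<mu>s k) (\<integral>x. h n x \<partial>\<mu>) < \<epsilon> / 4) sequentially"
    by (auto intro: eventually_conj)
  then show "eventually (\<lambda>k. dist (\<integral>x. F x \<partial>\<mu>s k) (\<integral>x. F x \<partial>\<mu>) < \<epsilon>) sequentially"
  proof eventually_elim
    case (elim k)
    then show ?case
      using err[OF \<mu>s(1,2), of k n] err[OF \<mu>, of n] n
      unfolding dist_real_def abs_less_iff abs_le_iff by linarith
  qed
qed

lemma integral_cutoff_tendsto_0:
  fixes q :: "'a::topological_space \<Rightarrow> 'b::real_normed_vector"
  assumes "prob_space \<mu>" "sets \<mu> = sets borel" "continuous_on UNIV q" "emeasure \<mu> {x. q x = 0} = 0"
  shows "(\<lambda>n. \<integral>x. max 0 (min 1 (2 - (real n + 1) * norm (q x))) \<partial>\<mu>) \<longlonglongrightarrow> 0"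
proof (rule prob_space.integral_tendsto_0_bounded[OF assms(1)])
  show "(\<lambda>x. max 0 (min 1 (2 - (real n + 1) * norm (q x)))) \<in> borel_measurable \<mu>" for n
    unfolding measurable_cong_sets[OF assms(2) refl]
    by (intro borel_measurable_continuous_onI continuous_intros assms(3))
  show "\<bar>max 0 (min 1 (2 - (real n + 1) * norm (q x)))\<bar> \<le> 1" for n x
    by simp
  have "{x. q x = 0} \<in> sets \<mu>"
    unfolding assms(2) by (intro borel_closed closed_Collect_eq assms(3) continuous_on_const)
  with assms(4) have "AE x in \<mu>. q x \<noteq> 0"
    by (intro AE_I'[of "{x. q x = 0}"]) auto
  then show "AE x in \<mu>. (\<lambda>n. max 0 (min 1 (2 - (real n + 1) * norm (q x)))) \<longlonglongrightarrow> 0"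
  proof eventually_elim
    case (elim x)
    obtain N :: nat where N: "2 / norm (q x) \<le> real N" using real_arch_simple by blast
    have "max 0 (min 1 (2 - (real n + 1) * norm (q x))) = 0" if "N \<le> n" for n
    proof -
      have "2 \<le> real N * norm (q x)" using N elim by (simp add: divide_le_eq)
      also have "\<dots> \<le> (real n + 1) * norm (q x)" using that by (intro mult_right_mono) auto
      finally show ?thesis by simp
    qed
    then show ?case by (intro tendsto_eventually) (auto simp: eventually_sequentially)
  qed
qed

lemma weak_conv_sph_integral_sgn:
  fixes \<mu>s :: "nat \<Rightarrow> 'a::euclidean_space measure" and q :: "'a \<Rightarrow> 'b::real_normed_vector"
    and \<psi> :: "'b \<Rightarrow> real" and f :: "'a \<Rightarrow> 'b"
  assumes wc: "weak_conv_sph \<mu>s \<mu>"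
    and \<mu>s: "\<And>k. prob_space (\<mu>s k)" "\<And>k. sets (\<mu>s k) = sets borel"
    and \<mu>: "prob_space \<mu>" "sets \<mu> = sets borel"
    and q: "continuous_on UNIV q" and null: "emeasure \<mu> {x. q x = 0} = 0"
    and \<psi>: "continuous_on UNIV \<psi>" and \<psi>_bound: "\<And>z. \<bar>\<psi> z\<bar> \<le> B"
    and f: "f \<in> borel_measurable borel" and f_sgn: "\<And>x. q x \<noteq> 0 \<Longrightarrow> f x = sgn (q x)"
  shows "(\<lambda>k. \<integral>x. \<psi> (f x) \<partial>\<mu>s k) \<longlonglongrightarrow> (\<integral>x. \<psi> (f x) \<partial>\<mu>)"
proof -
  define cutoff where "cutoff n x = max 0 (min 1 (2 - (real n + 1) * norm (q x)))" for n x
  \<comment> \<open>\<open>g n\<close> is \<open>\<psi> \<circ> f\<close> made continuous by not normalising vectors shorter than \<open>1 / (n + 1)\<close>\<close>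
  define g where "g n x = \<psi> ((1 / max (norm (q x)) (1 / (real n + 1))) *\<^sub>R q x)" for n x
  have "0 \<le> B" using \<psi>_bound[of 0] by linarith
  have cutoff_bound: "\<bar>2 * B * cutoff n x\<bar> \<le> 2 * B" for n x
    using mult_left_mono[of "cutoff n x" 1 "2 * B"] \<open>0 \<le> B\<close> by (simp add: cutoff_def)
  show ?thesis
  proof (rule weak_conv_sph_integral_approx[OF wc \<mu>s \<mu>, where g=g and h="\<lambda>n x. 2 * B * cutoff n x"])
    show "(\<lambda>x. \<psi> (f x)) \<in> borel_measurable borel"
      by (rule measurable_compose[OF f borel_measurable_continuous_onI[OF \<psi>]])
    show "bounded (range (\<lambda>x. \<psi> (f x)))" "bounded (range (g n))" for n
      using \<psi>_bound by (auto simp: bounded_iff g_def intro!: exI[of _ B])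
    have "0 < max (norm (q x)) (1 / (real n + 1))" for n x
      by (simp add: less_max_iff_disj add_pos_nonneg)
    then have "max (norm (q x)) (1 / (real n + 1)) \<noteq> 0" for n x
      by (simp only: neq_iff) blast
    then show "continuous_on UNIV (g n)" for n
      unfolding g_def by (intro continuous_on_compose2[OF \<psi> _ subset_UNIV] continuous_intros q) auto
    show "continuous_on UNIV (\<lambda>x. 2 * B * cutoff n x)" for n
      unfolding cutoff_def by (intro continuous_intros q)
    show "bounded (range (\<lambda>x. 2 * B * cutoff n x))" for n
      using cutoff_bound by (auto simp: bounded_iff intro!: exI[of _ "2 * B"])
    show "\<bar>\<psi> (f x) - g n x\<bar> \<le> 2 * B * cutoff n x" for n x
    proof (cases "1 / (real n + 1) \<le> norm (q x)")
      case True
      then have "q x \<noteq> 0" by (auto simp: add_pos_nonneg)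
      with True have "g n x = \<psi> (f x)" by (simp add: g_def f_sgn sgn_div_norm inverse_eq_divide)
      then show ?thesis using \<open>0 \<le> B\<close> by (simp add: cutoff_def)
    next
      case False
      then have "(real n + 1) * norm (q x) < 1" by (simp add: field_simps add_pos_nonneg)
      then have "cutoff n x = 1" by (simp add: cutoff_def)
      with \<psi>_bound[of "f x"] \<psi>_bound[of "(1 / max (norm (q x)) (1 / (real n + 1))) *\<^sub>R q x"]
      show ?thesis unfolding g_def abs_le_iff by simp
    qed
    show "(\<lambda>n. \<integral>x. 2 * B * cutoff n x \<partial>\<mu>) \<longlonglongrightarrow> 0"
      using tendsto_mult_right_zero[OF integral_cutoff_tendsto_0[OF \<mu> q null], of "2 * B"]
      by (simp add: cutoff_def)
  qed
qed

section \<open>Projections onto the circle and the Stiefel manifold\<close>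

lemma continuous_on_projU: "continuous_on UNIV (\<lambda>(U, x). projU U x)"
  unfolding projU_def Complex_eq case_prod_beta by (intro continuous_intros)

lemma borel_measurable_projU [measurable]: "(\<lambda>(U, x). projU U x) \<in> borel_measurable borel"
  using continuous_on_projU by (rule borel_measurable_continuous_onI)

lemma borel_measurable_PU [measurable]: "(\<lambda>(U, x). PU U x) \<in> borel_measurable borel"
proof -
  define nrm :: "complex \<Rightarrow> complex" where "nrm z = (if z \<noteq> 0 then z / complex_of_real (cmod z) else 1)" for z
  have "continuous_on (- {0}) nrm"
    by (rule continuous_on_cong[THEN iffD2, OF refl, of _ _ "\<lambda>z. z / complex_of_real (cmod z)"])
      (auto simp: nrm_def intro!: continuous_intros)
  then have "nrm \<in> borel_measurable borel"
    by (intro borel_measurable_continuous_countable_exceptions[of "{0}"]) auto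
  from measurable_compose[OF borel_measurable_projU this]
  show ?thesis by (simp add: PU_def nrm_def case_prod_beta')
qed

lemma norm_PU [simp]: "cmod (PU U x) = 1"
  by (simp add: PU_def norm_divide)

lemma PU_eq_sgn: "projU U x \<noteq> 0 \<Longrightarrow> PU U x = sgn (projU U x)"
  by (simp add: PU_def sgn_eq)

lemma borel_measurable_PU_at [measurable]: "PU U \<in> borel_measurable borel"
proof -
  have "(\<lambda>x. (U, x)) \<in> borel_measurable borel"
    by (intro borel_measurable_continuous_onI continuous_intros)
  from measurable_compose[OF this borel_measurable_PU] show ?thesis by simp
qed

lemma
  fixes M :: "'a::euclidean_space measure" and \<psi> :: "complex \<Rightarrow> real"
  assumes "prob_space M" "sets M = sets borel"
  shows prob_space_distr_PU: "prob_space (distr M borel (PU U))"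
    and AE_distr_PU: "AE z in distr M borel (PU U). cmod z = 1"
    and integral_distr_PU: "\<psi> \<in> borel_measurable borel \<Longrightarrow>
      (\<integral>z. \<psi> z \<partial>distr M borel (PU U)) = (\<integral>x. \<psi> (PU U x) \<partial>M)"
proof -
  have PU: "PU U \<in> M \<rightarrow>\<^sub>M borel"
    unfolding measurable_cong_sets[OF assms(2) refl] by (rule borel_measurable_PU_at)
  show "prob_space (distr M borel (PU U))"
    by (rule prob_space.prob_space_distr[OF assms(1) PU])
  show "AE z in distr M borel (PU U). cmod z = 1"
    by (subst AE_distr_iff[OF PU]) (auto intro: borel_closed closed_Collect_eq continuous_intros)
  show "(\<integral>z. \<psi> z \<partial>distr M borel (PU U)) = (\<integral>x. \<psi> (PU U x) \<partial>M)" if "\<psi> \<in> borel_measurable borel"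
    using integral_distr[OF PU that] .
qed

lemma (in prob_space) abs_integral_le_bound:
  fixes f :: "'a \<Rightarrow> real"
  assumes "f \<in> borel_measurable M" "\<And>x. \<bar>f x\<bar> \<le> B"
  shows "\<bar>\<integral>x. f x \<partial>M\<bar> \<le> B"
proof -
  have "integrable M f" using assms by (intro integrable_const_bound[where B=B]) auto
  moreover have "-B \<le> f x" "f x \<le> B" for x using assms(2)[of x] by auto
  ultimately have "(\<integral>x. f x \<partial>M) \<le> B" "-B \<le> (\<integral>x. f x \<partial>M)"
    by (auto intro!: integral_le_const integral_ge_const)
  then show ?thesis by simp
qed

lemma abs_integral_PU_le:
  fixes M :: "'a::euclidean_space measure" and \<psi> :: "complex \<Rightarrow> real"
  assumes "prob_space M" "sets M = sets borel" "\<psi> \<in> borel_measurable borel" "\<And>z. \<bar>\<psi> z\<bar> \<le> B"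
  shows "\<bar>\<integral>x. \<psi> (PU U x) \<partial>M\<bar> \<le> B"
proof (rule prob_space.abs_integral_le_bound[OF assms(1)])
  show "(\<lambda>x. \<psi> (PU U x)) \<in> borel_measurable M"
    unfolding measurable_cong_sets[OF assms(2) refl] using assms(3) by simp
qed (rule assms(4))

lemma hyperplane_null_lborel:
  fixes u :: "'a::euclidean_space"
  assumes "u \<noteq> 0"
  shows "{x. u \<bullet> x = 0} \<in> null_sets lborel"
proof -
  have "negligible {x. u \<bullet> x = 0}" using negligible_hyperplane[of u 0] assms by simp
  then have "{x. u \<bullet> x = 0} \<in> null_sets lebesgue" by (simp add: negligible_iff_null_sets)
  moreover have "{x. u \<bullet> x = 0} \<in> sets lborel" by (simp add: borel_closed closed_hyperplane)
  ultimately show ?thesis using null_sets_completion_iff by blast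
qed

lemma emeasure_lborel_unit_ball:
  "emeasure lborel (ball (0::'a::euclidean_space) 1) \<noteq> 0"
  "emeasure lborel (ball (0::'a::euclidean_space) 1) \<noteq> \<infinity>"
proof -
  have "unit_ball_vol (real DIM('a)) \<noteq> 0"
    using unit_ball_vol_pos[of "real DIM('a)", OF of_nat_0_le_iff] by linarith
  then show "emeasure lborel (ball (0::'a) 1) \<noteq> 0" by (simp add: emeasure_ball)
  show "emeasure lborel (ball (0::'a) 1) \<noteq> \<infinity>"
    using emeasure_lborel_ball_finite[of "0::'a" 1] by simp
qed

lemma hyperplane_null_sphere_unif:
  fixes u :: "'a::euclidean_space"
  assumes "u \<noteq> 0"
  shows "{x. u \<bullet> x = 0} \<in> null_sets sphere_unif"
proof -
  let ?H = "{x::'a. u \<bullet> x = 0}" and ?B = "uniform_measure lborel (ball (0::'a) 1)"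
  have H: "?H \<in> sets borel" by (simp add: borel_closed closed_hyperplane)
  \<comment> \<open>the hyperplane is a cone, so it is its own preimage under radial projection\<close>
  have "(\<lambda>x::'a. x /\<^sub>R norm x) -` ?H \<inter> space ?B = ?H" by (auto simp: inner_commute)
  then have "emeasure sphere_unif ?H = emeasure ?B ?H"
    using H by (simp add: sphere_unif_def emeasure_distr)
  also have "\<dots> = emeasure lborel (ball 0 1 \<inter> ?H) / emeasure lborel (ball (0::'a) 1)"
    using H by (intro emeasure_uniform_measure) auto
  also have "emeasure lborel (ball 0 1 \<inter> ?H) = 0"
    using H by (intro null_setsD1 null_sets_subset[OF hyperplane_null_lborel[OF assms]]) auto
  finally show ?thesis using H by (simp add: null_sets_def sphere_unif_def)
qed

lemma Pac_prob_space: "\<mu> \<in> Pac p \<Longrightarrow> prob_space \<mu>"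
  and sets_Pac: "\<mu> \<in> Pac p \<Longrightarrow> sets \<mu> = sets borel"
  by (simp_all add: Pac_def)

lemma Pac_projU_null:
  assumes "\<mu> \<in> Pac p" "fst U \<noteq> 0"
  shows "emeasure \<mu> {x. projU U x = 0} = 0"
proof -
  have "{x. fst U \<bullet> x = 0} \<in> null_sets \<mu>"
    using assms hyperplane_null_sphere_unif[OF assms(2)] by (auto simp: Pac_def absolutely_continuous_def)
  moreover have "{x. projU U x = 0} \<subseteq> {x. fst U \<bullet> x = 0}" by (auto simp: projU_def complex_eq_iff)
  moreover have "{x. projU U x = 0} \<in> sets \<mu>"
    unfolding sets_Pac[OF assms(1)] projU_def Complex_eq
    by (intro borel_closed closed_Collect_eq continuous_intros)
  ultimately show ?thesis by (meson null_sets_subset null_setsD1)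
qed

lemma borel_measurable_gram_schmidt2: "gram_schmidt2 \<in> borel_measurable (borel :: ('a::euclidean_space \<times> 'a) measure)"
  unfolding gram_schmidt2_def Let_def case_prod_beta by (simp only: borel_prod[symmetric]) measurable

lemma emeasure_lborel_unit_ball_pair:
  "emeasure lborel (ball (0::'a::euclidean_space) 1 \<times> ball (0::'a) 1) \<noteq> 0"
  "emeasure lborel (ball (0::'a::euclidean_space) 1 \<times> ball (0::'a) 1) \<noteq> \<infinity>"
proof -
  have "emeasure lborel (ball (0::'a) 1 \<times> ball (0::'a) 1)
      = emeasure lborel (ball (0::'a) 1) * emeasure lborel (ball (0::'a) 1)"
    by (subst lborel_prod[symmetric]) (rule lborel.emeasure_pair_measure_Times, auto)
  then show "emeasure lborel (ball (0::'a) 1 \<times> ball (0::'a) 1) \<noteq> 0"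
    "emeasure lborel (ball (0::'a) 1 \<times> ball (0::'a) 1) \<noteq> \<infinity>"
    using emeasure_lborel_unit_ball[where 'a='a] by (simp_all add: ennreal_mult_eq_top_iff)
qed

lemma measurable_gram_schmidt2_uniform:
  "gram_schmidt2 \<in> uniform_measure lborel (ball (0::'a::euclidean_space) 1 \<times> ball (0::'a) 1) \<rightarrow>\<^sub>M borel"
  by (subst measurable_cong_sets[where M'=borel and N'=borel])
    (simp_all add: borel_measurable_gram_schmidt2)

lemma prob_space_stiefel_unif: "prob_space (stiefel_unif :: ('a::euclidean_space \<times> 'a) measure)"
  unfolding stiefel_unif_def
  by (rule prob_space.prob_space_distr[OF prob_space_uniform_measure[OF emeasure_lborel_unit_ball_pair]
        measurable_gram_schmidt2_uniform])

lemma AE_stiefel_unif_fst_nonzero: "AE U in (stiefel_unif :: ('a::euclidean_space \<times> 'a) measure). fst U \<noteq> 0"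
proof -
  let ?B = "uniform_measure lborel (ball (0::'a) 1 \<times> ball (0::'a) 1)"
  have "{0::'a} \<times> (UNIV :: 'a set) \<in> null_sets (lborel \<Otimes>\<^sub>M lborel)"
    by (rule lborel.times_in_null_sets1) (auto intro: finite_imp_null_set_lborel)
  then have "AE xy in (lborel :: ('a \<times> 'a) measure). fst xy \<noteq> 0"
    unfolding lborel_prod[symmetric] by (rule AE_I') (auto simp: space_pair_measure)
  then have ae: "AE xy in ?B. fst (gram_schmidt2 xy) \<noteq> 0"
    by (intro AE_uniform_measureI) (auto simp: borel_open open_Times gram_schmidt2_def Let_def
        case_prod_beta elim: AE_mp)
  have "{U \<in> space borel. fst U \<noteq> (0::'a)} \<in> sets (borel :: ('a \<times> 'a) measure)"
    by (simp add: borel_open open_Collect_neq continuous_intros)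
  from AE_distr_iff[OF measurable_gram_schmidt2_uniform this] ae
  show ?thesis unfolding stiefel_unif_def by simp
qed

lemma sets_stiefel_unif: "sets stiefel_unif = sets borel"
  by (simp add: stiefel_unif_def)

lemma borel_measurable_integral_PU:
  fixes M :: "'a::euclidean_space measure" and \<psi> :: "complex \<Rightarrow> real"
  assumes "prob_space M" "sets M = sets borel" "\<psi> \<in> borel_measurable borel"
  shows "(\<lambda>U. \<integral>x. \<psi> (PU U x) \<partial>M) \<in> borel_measurable (stiefel_unif :: ('a \<times> 'a) measure)"
proof -
  interpret prob_space M by fact
  have "(\<lambda>(U, x). \<psi> (PU U x)) \<in> borel_measurable ((stiefel_unif :: ('a \<times> 'a) measure) \<Otimes>\<^sub>M M)"
    unfolding measurable_cong_sets[OF sets_pair_measure_borel[OF sets_stiefel_unif assms(2)] refl]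
    using measurable_compose[OF borel_measurable_PU assms(3)] by (simp add: case_prod_beta')
  then show ?thesis by (rule borel_measurable_lebesgue_integral)
qed

section \<open>Convergence of the sliced distance\<close>

lemma integral_stiefel_discrepancy_tendsto_0:
  fixes \<mu>s :: "nat \<Rightarrow> 'a::euclidean_space measure" and \<psi> :: "complex \<Rightarrow> real"
  assumes \<mu>s: "\<And>k. \<mu>s k \<in> Pac p" and \<mu>: "\<mu> \<in> Pac p" and wc: "weak_conv_sph \<mu>s \<mu>"
    and \<psi>: "continuous_on UNIV \<psi>" "\<And>z. \<bar>\<psi> z\<bar> \<le> B"
  shows "(\<lambda>k. \<integral>U. \<bar>(\<integral>x. \<psi> (PU U x) \<partial>\<mu>s k) - (\<integral>x. \<psi> (PU U x) \<partial>\<mu>)\<bar> \<partial>stiefel_unif) \<longlonglongrightarrow> 0"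
proof (rule prob_space.integral_tendsto_0_bounded[OF prob_space_stiefel_unif])
  note Pac = Pac_prob_space sets_Pac
  have \<psi>_meas: "\<psi> \<in> borel_measurable borel" using \<psi>(1) by (rule borel_measurable_continuous_onI)
  show "(\<lambda>U. \<bar>(\<integral>x. \<psi> (PU U x) \<partial>\<mu>s k) - (\<integral>x. \<psi> (PU U x) \<partial>\<mu>)\<bar>) \<in> borel_measurable stiefel_unif" for k
    using borel_measurable_integral_PU[OF Pac[OF \<mu>s[of k]] \<psi>_meas]
      borel_measurable_integral_PU[OF Pac[OF \<mu>] \<psi>_meas] by measurable
  show "\<bar>\<bar>(\<integral>x. \<psi> (PU U x) \<partial>\<mu>s k) - (\<integral>x. \<psi> (PU U x) \<partial>\<mu>)\<bar>\<bar> \<le> 2 * B" for k U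
    using abs_integral_PU_le[OF Pac[OF \<mu>s[of k]] \<psi>_meas \<psi>(2), of U]
      abs_integral_PU_le[OF Pac[OF \<mu>] \<psi>_meas \<psi>(2), of U]
    unfolding abs_abs abs_le_iff by linarith
  show "AE U in stiefel_unif. (\<lambda>k. \<bar>(\<integral>x. \<psi> (PU U x) \<partial>\<mu>s k) - (\<integral>x. \<psi> (PU U x) \<partial>\<mu>)\<bar>) \<longlonglongrightarrow> 0"
    using AE_stiefel_unif_fst_nonzero
  proof eventually_elim
    case (elim U)
    have "(\<lambda>k. \<integral>x. \<psi> (PU U x) \<partial>\<mu>s k) \<longlonglongrightarrow> (\<integral>x. \<psi> (PU U x) \<partial>\<mu>)"
    proof (rule weak_conv_sph_integral_sgn[OF wc Pac[OF \<mu>s] Pac[OF \<mu>] _ _ \<psi>])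
      show "continuous_on UNIV (projU U)"
        unfolding projU_def Complex_eq by (intro continuous_intros)
    qed (use Pac_projU_null[OF \<mu> elim] PU_eq_sgn[of U] in auto)
    from tendsto_rabs[OF tendsto_diff[OF this tendsto_const[of "\<integral>x. \<psi> (PU U x) \<partial>\<mu>"]]]
    show ?case by simp
  qed
qed

lemma SSWpp_eventually_le:
  fixes \<mu>s :: "nat \<Rightarrow> 'a::euclidean_space measure"
  assumes \<mu>s: "\<And>k. \<mu>s k \<in> Pac p" and \<mu>: "\<mu> \<in> Pac p" and wc: "weak_conv_sph \<mu>s \<mu>"
    and "0 < p" "0 < \<epsilon>"
  shows "eventually (\<lambda>k. SSWpp p (\<mu>s k) \<mu> \<le> ennreal \<epsilon>) sequentially"
proof -
  interpret S: prob_space "stiefel_unif :: ('a \<times> 'a) measure" by (rule prob_space_stiefel_unif)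
  note Pac = Pac_prob_space sets_Pac
  define K where "K = pi powr p"
  have "0 < K" by (simp add: K_def)
  define \<eta> where "\<eta> = min 1 (\<epsilon> / (3 * K))"
  have \<eta>: "0 < \<eta>" "\<eta> \<le> 1" "K * \<eta> \<le> \<epsilon> / 3"
    using \<open>0 < K\<close> \<open>0 < \<epsilon>\<close> by (auto simp: \<eta>_def min_def field_simps)
  have "0 < \<epsilon> / 3" using \<open>0 < \<epsilon>\<close> by simp
  obtain T :: "complex set" and \<phi> :: "complex \<Rightarrow> complex \<Rightarrow> real"
    where T: "finite T" "\<And>t. continuous_on UNIV (\<phi> t)" "\<And>t z. 0 \<le> \<phi> t z" "\<And>t z. t \<in> T \<Longrightarrow> \<phi> t z \<le> 1"
      and W: "\<And>\<nu>1 \<nu>2. prob_space \<nu>1 \<Longrightarrow> sets \<nu>1 = sets borel \<Longrightarrow> AE z in \<nu>1. cmod z = 1 \<Longrightarrow>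
        prob_space \<nu>2 \<Longrightarrow> sets \<nu>2 = sets borel \<Longrightarrow> AE z in \<nu>2. cmod z = 1 \<Longrightarrow>
        Wpp_S1 p \<nu>1 \<nu>2
          \<le> ennreal (\<epsilon> / 3 + pi powr p * (\<eta> + (\<Sum>t\<in>T. \<bar>(\<integral>z. \<phi> t z \<partial>\<nu>1) - (\<integral>z. \<phi> t z \<partial>\<nu>2)\<bar>)))"
    by (rule Wpp_S1_le_test_integrals[OF \<open>0 < p\<close> \<open>0 < \<epsilon> / 3\<close> \<eta>(1,2)]) blast
  define D where "D t k U = \<bar>(\<integral>x. \<phi> t (PU U x) \<partial>\<mu>s k) - (\<integral>x. \<phi> t (PU U x) \<partial>\<mu>)\<bar>" for t k U
  have \<phi>_meas: "\<phi> t \<in> borel_measurable borel" for t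
    using T(2) by (rule borel_measurable_continuous_onI)
  have D_meas: "D t k \<in> borel_measurable stiefel_unif" for t k
    using borel_measurable_integral_PU[OF Pac[OF \<mu>s[of k]] \<phi>_meas]
      borel_measurable_integral_PU[OF Pac[OF \<mu>] \<phi>_meas]
    unfolding D_def by measurable
  have integral_le_1: "\<bar>\<integral>x. \<phi> t (PU U x) \<partial>M\<bar> \<le> 1" if "M \<in> Pac p" "t \<in> T" for M t U
    using T(3) T(4)[OF that(2)] by (intro abs_integral_PU_le[OF Pac[OF that(1)] \<phi>_meas]) simp
  have D_integrable: "integrable stiefel_unif (D t k)" if "t \<in> T" for t k
  proof (rule S.integrable_const_bound[where B=2])
    have "norm (D t k U) \<le> 2" for U
      using integral_le_1[OF \<mu>s[of k] that, of U] integral_le_1[OF \<mu> that, of U]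
      unfolding D_def abs_le_iff real_norm_def abs_abs by linarith
    then show "AE U in stiefel_unif. norm (D t k U) \<le> 2" by simp
  qed (rule D_meas)
  have "(\<lambda>k. \<Sum>t\<in>T. \<integral>U. D t k U \<partial>stiefel_unif) \<longlonglongrightarrow> 0"
    unfolding D_def
    by (intro tendsto_null_sum integral_stiefel_discrepancy_tendsto_0[OF \<mu>s \<mu> wc T(2), where B=1])
      (use T(3,4) in \<open>auto simp: abs_le_iff\<close>)
  then have "eventually (\<lambda>k. (\<Sum>t\<in>T. \<integral>U. D t k U \<partial>stiefel_unif) < \<epsilon> / (3 * K)) sequentially"
    using \<open>0 < \<epsilon>\<close> \<open>0 < K\<close> by (intro order_tendstoD) auto
  then show ?thesis
  proof eventually_elim
    case (elim k)
    have "Wpp_S1 p (distr (\<mu>s k) borel (PU U)) (distr \<mu> borel (PU U))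
        \<le> ennreal (\<epsilon> / 3 + K * (\<eta> + (\<Sum>t\<in>T. D t k U)))" for U
      using W[OF prob_space_distr_PU[OF Pac[OF \<mu>s[of k]]] _ AE_distr_PU[OF Pac[OF \<mu>s[of k]]]
          prob_space_distr_PU[OF Pac[OF \<mu>]] _ AE_distr_PU[OF Pac[OF \<mu>]]]
      by (simp add: D_def K_def integral_distr_PU[OF Pac[OF \<mu>s[of k]] \<phi>_meas] integral_distr_PU[OF Pac[OF \<mu>] \<phi>_meas])
    then have "SSWpp p (\<mu>s k) \<mu> \<le> (\<integral>\<^sup>+U. ennreal (\<epsilon> / 3 + K * (\<eta> + (\<Sum>t\<in>T. D t k U))) \<partial>stiefel_unif)"
      unfolding SSWpp_def by (intro nn_integral_mono)
    also have "\<dots> = ennreal (\<epsilon> / 3 + K * (\<eta> + (\<Sum>t\<in>T. \<integral>U. D t k U \<partial>stiefel_unif)))"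
    proof (subst nn_integral_eq_integral)
      show "integrable stiefel_unif (\<lambda>U. \<epsilon> / 3 + K * (\<eta> + (\<Sum>t\<in>T. D t k U)))"
        using D_integrable by auto
      show "AE U in stiefel_unif. 0 \<le> \<epsilon> / 3 + K * (\<eta> + (\<Sum>t\<in>T. D t k U))"
        using \<open>0 < \<epsilon>\<close> \<open>0 < K\<close> \<eta> by (auto simp: D_def intro!: sum_nonneg)
    qed (use D_integrable in \<open>simp add: S.prob_space Bochner_Integration.integral_sum\<close>)
    also have "\<dots> \<le> ennreal \<epsilon>"
    proof (rule ennreal_leI)
      have "K * (\<Sum>t\<in>T. \<integral>U. D t k U \<partial>stiefel_unif) \<le> \<epsilon> / 3"
        using elim \<open>0 < K\<close> by (simp add: field_simps)
      then show "\<epsilon> / 3 + K * (\<eta> + (\<Sum>t\<in>T. \<integral>U. D t k U \<partial>stiefel_unif)) \<le> \<epsilon>"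
        using \<eta>(3) by (simp add: distrib_left)
    qed
    finally show ?case .
  qed
qed

theorem mainTheorem8:
  fixes p :: real and \<mu>s :: "nat \<Rightarrow> 'a::euclidean_space measure" and \<mu> :: "'a measure"
  assumes "DIM('a) \<ge> 2" and "p \<ge> 1"
    and "\<And>k. \<mu>s k \<in> Pac p" and "\<mu> \<in> Pac p"
    and "weak_conv_sph \<mu>s \<mu>"
  shows "(\<lambda>k. SSW p (\<mu>s k) \<mu>) \<longlonglongrightarrow> 0"
proof -
  have "0 < p" using assms(2) by simp
  have "(\<lambda>k. enn2real (SSWpp p (\<mu>s k) \<mu>)) \<longlonglongrightarrow> 0"
  proof (rule tendstoI)
    fix \<epsilon> :: real assume "0 < \<epsilon>"
    then have "eventually (\<lambda>k. SSWpp p (\<mu>s k) \<mu> \<le> ennreal (\<epsilon> / 2)) sequentially"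
      by (intro SSWpp_eventually_le[OF assms(3-5) \<open>0 < p\<close>]) simp
    then show "eventually (\<lambda>k. dist (enn2real (SSWpp p (\<mu>s k) \<mu>)) 0 < \<epsilon>) sequentially"
    proof eventually_elim
      case (elim k)
      then have "enn2real (SSWpp p (\<mu>s k) \<mu>) \<le> \<epsilon> / 2"
        using \<open>0 < \<epsilon>\<close> by (intro enn2real_leI) auto
      then show ?case using \<open>0 < \<epsilon>\<close> by simp
    qed
  qed
  from tendsto_zero_powrI[OF this tendsto_const, of "1 / p"] \<open>0 < p\<close>
  show ?thesis by (simp add: SSW_def)
qed

end
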